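(* Let $K=\mathbb{Q}(\sqrt{-d})$ with $d\in\{2,7,11,19,43,67,163\}$ (i.e. $K$ is an imaginary quadratic field of class number $1$ with $d\neq 1,3$). Let $L=\mathcal{O}_K=\mathbb{Z}+\mathbb{Z}\theta_d\subset\mathbb{C}\cong\mathbb{R}^2$ be the lattice of algebraic integers of $K$, where $\theta_d=\sqrt{-d}$ if $-d\equiv 2,3\pmod 4$ and $\theta_d=\frac{1+\sqrt{-d}}{2}$ if $-d\equiv 1\pmod 4$. Then for every $m>0$ such that the shell $L_m=\{x\in L: |x|^2=m\}$ is nonempty, $L_m$ is not a spherical $2$-design.
   Context: A finite nonempty set $X\subset S^{n-1}$ is a spherical $t$-design if $\frac{1}{|X|}\sum_{x\in X}f(x)=\frac{1}{|S^{n-1}|}\int_{S^{n-1}}f\,d\sigma$ for all polynomials $f$ of degree at most $t$; a finite nonempty subset $X$ of the sphere of radius $r$ is a spherical $t$-design if $\frac{1}{r}X$ is one. (For $n=2$, a finite set $\{\xi_1,\dots,\xi_N\}$ on the unit circle in $\mathbb{C}$ is a spherical $t$-design iff $\sum_i\xi_i^k=0$ for $k=1,\dots,t$.) *)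

theory Defs
  imports "HOL-Analysis.Analysis"
begin

text \<open>A polynomial of degree at most t in the two real coordinates is a linear combination of
  monomials x^i y^j with i + j \<le> t, so by linearity the defining identity is required for
  these monomials.\<close>
definition spherical_design :: "nat \<Rightarrow> complex set \<Rightarrow> bool" where
  "spherical_design t X \<longleftrightarrow>
     finite X \<and> X \<noteq> {} \<and> X \<subseteq> sphere 0 1 \<and>
     (\<forall>i j. i + j \<le> t \<longrightarrow>
        (1 / real (card X)) * (\<Sum>x\<in>X. Re x ^ i * Im x ^ j)
        = (1 / (2 * pi)) * integral {0..2*pi} (\<lambda>\<phi>. cos \<phi> ^ i * sin \<phi> ^ j))"

definition spherical_design_radius :: "nat \<Rightarrow> real \<Rightarrow> complex set \<Rightarrow> bool" where
  "spherical_design_radius t r X \<longleftrightarrow>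
     r > 0 \<and> X \<subseteq> sphere 0 r \<and> spherical_design t ((\<lambda>x. x / complex_of_real r) ` X)"

definition theta :: "int \<Rightarrow> complex" where
  "theta d = (if (- d) mod 4 \<in> {2, 3} then \<i> * complex_of_real (sqrt (real_of_int d))
              else (1 + \<i> * complex_of_real (sqrt (real_of_int d))) / 2)"

definition OK_lattice :: "int \<Rightarrow> complex set" where
  "OK_lattice d = {of_int a + of_int b * theta d | a b. True}"

definition shell :: "int \<Rightarrow> real \<Rightarrow> complex set" where
  "shell d m = {x \<in> OK_lattice d. (cmod x)^2 = m}"

end

(* If L_m is a spherical 2-design, its second moments force \<Sum>x\<in>L_m. x\<^sup>2 = 0; we show that
   S(k) = \<Sum>{z\<^sup>2 | z \<in> O_K, N z = k} never vanishes on a nonempty shell. As O_K has class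
   number one, every rational prime p is inert or a norm p = N \<pi> (Fermat's descent, using that
   the primes below \<surd>(|D|/3) are inert). S is then computed prime by prime: S(k) = p\<^sup>2 S(k/p\<^sup>2)
   for inert p, S(k) = \<pi>\<^sup>2 S(k/p) for ramified p, and S(p^e m) = h_e(\<pi>\<^sup>2, cnj \<pi>\<^sup>2) S(m) for
   split p, where the complete homogeneous polynomial h_e(\<pi>\<^sup>2, cnj \<pi>\<^sup>2) is congruent to
   cnj \<pi>^(2e) modulo \<pi>, hence nonzero. Induction on k from S(1) = 2 finishes the proof. *)

theory Submission
  imports Defs "HOL-Number_Theory.Cong"
begin

section \<open>Second moments of planar 2-designs\<close>

lemma has_integral_0_2pi_derivative:
  assumes "\<And>x. (f has_real_derivative f' x) (at x)"
  shows "(f' has_integral (f (2*pi) - f 0)) {0..2*pi}"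
proof (rule fundamental_theorem_of_calculus)
  fix x :: real
  show "(f has_vector_derivative f' x) (at x within {0..2*pi})"
    using assms[of x] by (simp add: has_real_derivative_iff_has_vector_derivative has_vector_derivative_at_within)
qed simp

lemma integral_0_2pi_cos_sq: "integral {0..2*pi} (\<lambda>\<phi>. cos \<phi> ^ 2) = pi"
proof -
  have "((\<lambda>x. x/2 + sin (2*x)/4) has_real_derivative cos x ^ 2) (at x)" for x :: real
  proof -
    have "((\<lambda>x. x/2 + sin (2*x)/4) has_real_derivative (1/2 + cos (2*x) * 2 / 4)) (at x)"
      by (auto intro!: derivative_eq_intros)
    then show ?thesis unfolding cos_double_cos by (simp add: field_simps)
  qed
  from has_integral_0_2pi_derivative[OF this] show ?thesis by (simp add: integral_unique)
qed

lemma integral_0_2pi_sin_sq: "integral {0..2*pi} (\<lambda>\<phi>. sin \<phi> ^ 2) = pi"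
proof -
  have "((\<lambda>x. x/2 - sin (2*x)/4) has_real_derivative sin x ^ 2) (at x)" for x :: real
  proof -
    have "((\<lambda>x. x/2 - sin (2*x)/4) has_real_derivative (1/2 - cos (2*x) * 2 / 4)) (at x)"
      by (auto intro!: derivative_eq_intros)
    then show ?thesis unfolding cos_double_sin by (simp add: field_simps)
  qed
  from has_integral_0_2pi_derivative[OF this] show ?thesis by (simp add: integral_unique)
qed

lemma integral_0_2pi_cos_sin: "integral {0..2*pi} (\<lambda>\<phi>. cos \<phi> * sin \<phi>) = 0"
proof -
  have "((\<lambda>x. sin x ^ 2 / 2) has_real_derivative cos x * sin x) (at x)" for x :: real
    by (auto intro!: derivative_eq_intros)
  from has_integral_0_2pi_derivative[OF this] show ?thesis by (simp add: integral_unique)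
qed

lemma spherical_design_2_sum_sq:
  assumes "spherical_design 2 X"
  shows "(\<Sum>x\<in>X. x^2) = 0"
proof -
  have moment: "(1 / real (card X)) * (\<Sum>x\<in>X. Re x ^ i * Im x ^ j)
        = (1 / (2 * pi)) * integral {0..2*pi} (\<lambda>\<phi>. cos \<phi> ^ i * sin \<phi> ^ j)"
    if "i + j \<le> 2" for i j
    using assms that unfolding spherical_design_def by blast
  have "card X > 0"
    using assms unfolding spherical_design_def by (simp add: card_gt_0_iff)
  then have Re_sq: "(\<Sum>x\<in>X. Re x ^ 2) = (\<Sum>x\<in>X. Im x ^ 2)"
    and Re_Im: "(\<Sum>x\<in>X. Re x * Im x) = 0"
    using moment[of 2 0] moment[of 0 2] moment[of 1 1]
    by (simp_all add: integral_0_2pi_cos_sq integral_0_2pi_sin_sq integral_0_2pi_cos_sin)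
  show ?thesis
  proof (rule complex_eqI)
    show "Re (\<Sum>x\<in>X. x^2) = Re 0"
      using Re_sq by (simp add: Re_sum power2_eq_square sum_subtractf)
    show "Im (\<Sum>x\<in>X. x^2) = Im 0"
      using Re_Im by (simp add: Im_sum power2_eq_square mult.commute flip: sum_distrib_left)
  qed
qed

lemma spherical_design_radius_2_sum_sq:
  assumes "spherical_design_radius 2 r X"
  shows "(\<Sum>x\<in>X. x^2) = 0"
proof -
  have r: "complex_of_real r \<noteq> 0"
    using assms unfolding spherical_design_radius_def by simp
  have "inj_on (\<lambda>x. x / complex_of_real r) X"
    using r by (intro inj_onI) simp
  then have "(\<Sum>x\<in>X. x^2) / complex_of_real r ^ 2 = (\<Sum>y\<in>(\<lambda>x. x / complex_of_real r) ` X. y^2)"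
    by (simp add: sum.reindex power_divide sum_divide_distrib)
  also have "\<dots> = 0"
    using assms unfolding spherical_design_radius_def by (simp add: spherical_design_2_sum_sq)
  finally show ?thesis using r by simp
qed

text \<open>The complete homogeneous polynomial \<open>h_e(a, b) = \<Sum>{a^i b^(e - i) | i \<le> e}\<close>, given by
  the recursion it shares with the sums over split prime powers.\<close>
fun complete_hom :: "'a::comm_ring_1 \<Rightarrow> 'a \<Rightarrow> nat \<Rightarrow> 'a" where
  "complete_hom a b 0 = 1"
| "complete_hom a b (Suc 0) = a + b"
| "complete_hom a b (Suc (Suc e)) = (a + b) * complete_hom a b (Suc e) - a * b * complete_hom a b e"

lemma pos_factor_less:
  fixes k a j :: int
  assumes "k > 0" "a > 1" "k = a * j"
  shows "0 < j \<and> j < k"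
proof
  show "0 < j" using assms by (auto simp: zero_less_mult_iff)
  then have "1 * j < a * j" using assms(2) by (intro mult_strict_right_mono)
  then show "j < k" using assms(3) by simp
qed

lemma exists_cong_centered:
  fixes p x t :: int
  assumes "p > 0"
  obtains c where "[c = x] (mod p)" "\<bar>2*c + t\<bar> \<le> p"
proof
  define j where "j = (2*x + t + p) div (2*p)"
  have "(2*x + t + p) mod (2*p) + j * (2*p) = 2*x + t + p"
    unfolding j_def by (rule mod_div_mult_eq)
  then have "2*(x - p*j) + t + p = (2*x + t + p) mod (2*p)"
    by (simp add: algebra_simps)
  moreover have "0 \<le> (2*x + t + p) mod (2*p)" "(2*x + t + p) mod (2*p) < 2*p"
    using assms by simp_all
  ultimately show "\<bar>2*(x - p*j) + t\<bar> \<le> p" by linarith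
  show "[x - p*j = x] (mod p)"
    by (simp add: cong_iff_dvd_diff)
qed

lemma sum_sq_mult_image:
  fixes s :: "'a::field"
  assumes "s \<noteq> 0"
  shows "(\<Sum>z\<in>(\<lambda>w. s * w) ` A. z^2) = s^2 * (\<Sum>w\<in>A. w^2)"
proof -
  have "inj_on (\<lambda>w. s * w) A" using assms by (intro inj_onI) simp
  then show ?thesis by (simp add: sum.reindex power_mult_distrib sum_distrib_left)
qed

lemma dvd_binary_form_by_residues:
  fixes p t n x y :: int
  assumes "p > 0" "p dvd x^2 + t*x*y + n*y^2"
    and "\<forall>a\<in>{0..<p}. \<forall>b\<in>{0..<p}. p dvd a^2 + t*a*b + n*b^2 \<longrightarrow> b = 0"
  shows "p dvd y"
proof -
  have "[x^2 + t*x*y + n*y^2 = (x mod p)^2 + t*(x mod p)*(y mod p) + n*(y mod p)^2] (mod p)"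
    by (intro cong_add cong_mult cong_pow cong_refl) (simp_all add: cong_def)
  then have "p dvd (x mod p)^2 + t*(x mod p)*(y mod p) + n*(y mod p)^2"
    using assms(2) cong_dvd_iff by blast
  moreover have "x mod p \<in> {0..<p}" "y mod p \<in> {0..<p}" using assms(1) by simp_all
  ultimately have "y mod p = 0" using assms(3) by blast
  then show ?thesis by (simp add: dvd_eq_mod_eq_0)
qed

lemma le_of_three_sq_le:
  fixes p d B :: int
  assumes "3*p^2 \<le> d" "d < 3*(B+1)^2" "B \<ge> 0"
  shows "p \<le> B"
proof (rule ccontr)
  assume "\<not> p \<le> B"
  then have "(B+1)^2 \<le> p^2" using assms(3) by (intro power_mono) auto
  then show False using assms(1,2) by simp
qed

lemma prime_le_7_cases:
  fixes p :: int
  assumes "prime p" "p \<le> 7"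
  shows "p = 2 \<or> p = 3 \<or> p = 5 \<or> p = 7"
proof -
  have "\<not> prime (4::int)" "\<not> prime (6::int)"
    unfolding prime_int_iff by (auto intro!: exI[of _ 2])
  then have "p \<noteq> 4" "p \<noteq> 6" using assms(1) by auto
  moreover have "p > 1" using prime_gt_1_int assms(1) by blast
  ultimately show ?thesis using assms(2) by presburger
qed

section \<open>Imaginary quadratic rings of integers\<close>

text \<open>The discriminant \<open>t\<^sup>2 - 4n < -4\<close>
  excludes \<open>\<int>[i]\<close> and \<open>\<int>[(1 + \<surd>-3)/2]\<close>, so the only units are \<open>\<plusminus>1\<close>.\<close>
locale imag_quadratic_ring =
  fixes t n :: int and \<theta> :: complex
  assumes theta_sq: "\<theta>^2 = of_int t * \<theta> - of_int n"
    and cnj_theta: "cnj \<theta> = of_int t - \<theta>"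
    and Im_theta_nonzero: "Im \<theta> \<noteq> 0"
    and disc_gt_4: "4*n - t^2 > 4"
    and trace_01: "t \<in> {0, 1}"
begin

definition OK :: "complex set" where
  "OK = {of_int a + of_int b * \<theta> | a b. True}"

definition nform :: "int \<Rightarrow> int \<Rightarrow> int" where
  "nform a b = a^2 + t*a*b + n*b^2"

definition N :: "complex \<Rightarrow> int" where
  "N z = \<lfloor>(cmod z)^2\<rfloor>"

definition odvd :: "complex \<Rightarrow> complex \<Rightarrow> bool" where
  "odvd a b \<longleftrightarrow> (\<exists>c\<in>OK. b = a * c)"

definition norm_shell :: "int \<Rightarrow> complex set" where
  "norm_shell k = {z \<in> OK. N z = k}"

definition shell_sq_sum :: "int \<Rightarrow> complex" where
  "shell_sq_sum k = (\<Sum>z\<in>norm_shell k. z^2)"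

definition inert :: "int \<Rightarrow> bool" where
  "inert p \<longleftrightarrow> (\<forall>z\<in>OK. p dvd N z \<longrightarrow> odvd (of_int p) z)"

lemma mem_OK [simp, intro]: "of_int a + of_int b * \<theta> \<in> OK"
  by (auto simp: OK_def)

lemma OK_cases:
  assumes "z \<in> OK"
  obtains a b where "z = of_int a + of_int b * \<theta>"
  using assms unfolding OK_def by blast

lemma OK_coords_inject:
  assumes "of_int a + of_int b * \<theta> = of_int c + of_int e * \<theta>"
  shows "a = c \<and> b = e"
proof -
  have "of_int b * Im \<theta> = of_int e * Im \<theta>"
    using arg_cong[OF assms, of Im] by simp
  then have "b = e" using Im_theta_nonzero by simp
  with assms show ?thesis by simp
qed

lemma OK_coords_mult:
  "(of_int a + of_int b * \<theta>) * (of_int c + of_int e * \<theta>) =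
     of_int (a*c - n*b*e) + of_int (a*e + b*c + t*b*e) * \<theta>"
proof -
  have "(of_int a + of_int b * \<theta>) * (of_int c + of_int e * \<theta>) =
      of_int a * of_int c + (of_int a * of_int e + of_int b * of_int c) * \<theta> + of_int b * of_int e * \<theta>^2"
    by algebra
  then show ?thesis unfolding theta_sq by (simp add: algebra_simps)
qed

lemma cnj_OK_coords: "cnj (of_int a + of_int b * \<theta>) = of_int (a + t*b) + of_int (-b) * \<theta>"
  by (simp add: cnj_theta algebra_simps)

lemma OK_int [simp, intro]: "of_int k \<in> OK"
  using mem_OK[of k 0] by simp

lemma OK_theta [simp, intro]: "\<theta> \<in> OK"
  using mem_OK[of 0 1] by simp

lemma OK_0 [simp]: "0 \<in> OK" and OK_1 [simp]: "1 \<in> OK"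
  using OK_int[of 0] OK_int[of 1] by simp_all

lemma OK_mult [intro]: "z \<in> OK \<Longrightarrow> w \<in> OK \<Longrightarrow> z * w \<in> OK"
  by (metis OK_cases OK_coords_mult mem_OK)

lemma OK_add [intro]:
  assumes "z \<in> OK" "w \<in> OK" shows "z + w \<in> OK"
proof -
  obtain a b c e where "z = of_int a + of_int b * \<theta>" "w = of_int c + of_int e * \<theta>"
    using assms by (metis OK_cases)
  then have "z + w = of_int (a + c) + of_int (b + e) * \<theta>" by (simp add: algebra_simps)
  then show ?thesis by (simp only: mem_OK)
qed

lemma OK_uminus [intro]:
  assumes "z \<in> OK" shows "- z \<in> OK"
proof -
  obtain a b where "z = of_int a + of_int b * \<theta>" using assms by (rule OK_cases)
  then have "- z = of_int (- a) + of_int (- b) * \<theta>" by (simp add: algebra_simps)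
  then show ?thesis by (simp only: mem_OK)
qed

lemma OK_diff [intro]: "z \<in> OK \<Longrightarrow> w \<in> OK \<Longrightarrow> z - w \<in> OK"
  using OK_add[of z "- w"] by auto

lemma OK_power [intro]: "z \<in> OK \<Longrightarrow> z ^ e \<in> OK"
  by (induction e) auto

lemma OK_cnj [intro]: "z \<in> OK \<Longrightarrow> cnj z \<in> OK"
  by (metis OK_cases cnj_OK_coords mem_OK)

lemma cmod_sq_OK_coords: "(cmod (of_int a + of_int b * \<theta>))^2 = of_int (nform a b)"
proof -
  have "(of_int a + of_int b * \<theta>) * cnj (of_int a + of_int b * \<theta>) = of_int (nform a b)"
    unfolding cnj_OK_coords OK_coords_mult nform_def by (simp add: algebra_simps power2_eq_square)
  then have "complex_of_real ((cmod (of_int a + of_int b * \<theta>))^2) = complex_of_real (of_int (nform a b))"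
    by (simp only: complex_norm_square of_real_of_int_eq)
  then show ?thesis by (simp only: of_real_eq_iff)
qed

lemma N_OK_coords: "N (of_int a + of_int b * \<theta>) = nform a b"
  unfolding N_def cmod_sq_OK_coords by simp

lemma cmod_sq_eq_N: "z \<in> OK \<Longrightarrow> (cmod z)^2 = of_int (N z)"
  by (elim OK_cases) (simp only: cmod_sq_OK_coords N_OK_coords)

lemma mult_cnj_eq_N: "z \<in> OK \<Longrightarrow> z * cnj z = of_int (N z)"
  by (simp add: complex_norm_square [symmetric] cmod_sq_eq_N)

lemma N_mult: "z \<in> OK \<Longrightarrow> w \<in> OK \<Longrightarrow> N (z * w) = N z * N w"
  unfolding N_def by (simp add: norm_mult power_mult_distrib cmod_sq_eq_N flip: of_int_mult)

lemma N_nonneg: "z \<in> OK \<Longrightarrow> N z \<ge> 0"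
  unfolding N_def by simp

lemma N_eq_0_iff: "z \<in> OK \<Longrightarrow> N z = 0 \<longleftrightarrow> z = 0"
proof -
  assume "z \<in> OK"
  then have "real_of_int (N z) = (cmod z)^2" by (simp add: cmod_sq_eq_N)
  then have "N z = 0 \<longleftrightarrow> (cmod z)^2 = 0" by (metis of_int_eq_0_iff)
  then show ?thesis by simp
qed

lemma N_cnj [simp]: "N (cnj z) = N z"
  unfolding N_def by simp

lemma N_of_int [simp]: "N (of_int k) = k^2"
  using N_OK_coords[of k 0] by (simp add: nform_def)

lemma four_nform: "4 * nform a b = (2*a + t*b)^2 + (4*n - t^2) * b^2"
  unfolding nform_def by (simp add: algebra_simps power2_eq_square)

lemma nform_mult: "nform (v * a) (v * b) = v^2 * nform a b"
  unfolding nform_def by (simp add: algebra_simps power2_eq_square)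

lemma nform_cong:
  "[a = a'] (mod p) \<Longrightarrow> [b = b'] (mod p) \<Longrightarrow> [nform a b = nform a' b'] (mod p)"
  unfolding nform_def by (intro cong_add cong_mult cong_pow cong_refl)

lemma prime_dvd_nform_imp_dvd_fst:
  assumes "prime p" "p dvd nform a b" "p dvd b"
  shows "p dvd a"
proof -
  have "p dvd nform a b - t*a*b - n*b^2"
    using assms(2,3) by (intro dvd_diff) (auto simp: power2_eq_square)
  then have "p dvd a^2" by (simp add: nform_def)
  then show ?thesis using assms(1) prime_dvd_power by blast
qed

lemma odvd_trans: "odvd a b \<Longrightarrow> odvd b c \<Longrightarrow> odvd a c"
  unfolding odvd_def by (metis OK_mult mult.assoc)

lemma odvd_mult_right: "c \<in> OK \<Longrightarrow> odvd a (a * c)"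
  unfolding odvd_def by auto

lemma odvd_mult: "odvd a b \<Longrightarrow> c \<in> OK \<Longrightarrow> odvd a (b * c)"
  unfolding odvd_def by (metis OK_mult mult.assoc)

lemma odvd_add: "odvd a b \<Longrightarrow> odvd a c \<Longrightarrow> odvd a (b + c)"
  unfolding odvd_def by (metis OK_add distrib_left)

lemma odvd_diff: "odvd a b \<Longrightarrow> odvd a c \<Longrightarrow> odvd a (b - c)"
  unfolding odvd_def by (metis OK_diff right_diff_distrib)

lemma odvd_cnj: "odvd a b \<Longrightarrow> odvd (cnj a) (cnj b)"
  unfolding odvd_def by (metis OK_cnj complex_cnj_mult)

lemma odvd_imp_N_dvd: "odvd a b \<Longrightarrow> a \<in> OK \<Longrightarrow> N a dvd N b"
  unfolding odvd_def by (metis dvd_triv_left N_mult)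

lemma odvd_N: "a \<in> OK \<Longrightarrow> odvd a (of_int (N a))"
  by (metis mult_cnj_eq_N odvd_mult_right OK_cnj)

lemma odvd_of_int_dvd: "odvd a (of_int p) \<Longrightarrow> p dvd r \<Longrightarrow> odvd a (of_int r)"
  by (elim dvdE) (simp add: odvd_mult)

lemma odvd_of_int_iff:
  "odvd (of_int p) (of_int x + of_int y * \<theta>) \<longleftrightarrow> p dvd x \<and> p dvd y"
proof
  assume "odvd (of_int p) (of_int x + of_int y * \<theta>)"
  then obtain c where "c \<in> OK" "of_int x + of_int y * \<theta> = of_int p * c"
    unfolding odvd_def by blast
  moreover obtain a b where "c = of_int a + of_int b * \<theta>" using \<open>c \<in> OK\<close> by (rule OK_cases)
  ultimately have "of_int x + of_int y * \<theta> = of_int (p*a) + of_int (p*b) * \<theta>"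
    by (simp add: algebra_simps)
  then have "x = p*a \<and> y = p*b" by (rule OK_coords_inject)
  then show "p dvd x \<and> p dvd y" by auto
next
  assume "p dvd x \<and> p dvd y"
  then obtain a b where "x = p*a" "y = p*b" by (auto elim!: dvdE)
  then have "of_int x + of_int y * \<theta> = of_int p * (of_int a + of_int b * \<theta>)"
    by (simp add: algebra_simps)
  then show "odvd (of_int p) (of_int x + of_int y * \<theta>)" unfolding odvd_def by auto
qed

subsection \<open>Elements of prime norm are prime\<close>

text \<open>If \<open>\<pi> = a + b\<theta>\<close> has prime norm \<open>p\<close>, then \<open>p \<nmid> b\<close>; with \<open>b v \<equiv> 1 (mod p)\<close>
  we get \<open>\<theta> + a v = v \<pi> - \<theta> (b v - 1) \<equiv> 0 (mod \<pi>)\<close>, as \<open>\<pi>\<close> divides \<open>p\<close>.\<close>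
lemma theta_cong_int:
  assumes "\<pi> \<in> OK" "prime (N \<pi>)"
  obtains c where "odvd \<pi> (\<theta> - of_int c)"
proof -
  obtain a b where \<pi>: "\<pi> = of_int a + of_int b * \<theta>" using assms(1) by (rule OK_cases)
  define p where "p = N \<pi>"
  have p: "prime p" "p = nform a b" using assms(2) by (simp_all add: p_def \<pi> N_OK_coords)
  have "\<not> p dvd b"
  proof
    assume "p dvd b"
    moreover have "p dvd a" using prime_dvd_nform_imp_dvd_fst[of p a b] p \<open>p dvd b\<close> by simp
    ultimately have "p * p dvd nform a b"
      unfolding nform_def power2_eq_square by (intro dvd_add mult_dvd_mono dvd_mult) auto
    then show False using p prime_gt_1_int[of p] by (simp add: dvd_antisym)
  qed
  then have "coprime b p" using p(1) by (metis prime_imp_coprime coprime_commute)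
  then obtain v where "[b * v = 1] (mod p)" using cong_solve_coprime_int by blast
  then obtain u where u: "b * v - 1 = p * u" by (auto simp: cong_iff_dvd_diff elim: dvdE)
  have "\<theta> + of_int (a * v) = of_int v * \<pi> - \<theta> * of_int (b * v - 1)"
    by (simp add: \<pi> algebra_simps)
  also have "\<dots> = \<pi> * (of_int v - \<theta> * of_int u * cnj \<pi>)"
    using mult_cnj_eq_N[OF assms(1)] by (simp add: u p_def algebra_simps)
  finally have "\<theta> - of_int (- a * v) = \<pi> * (of_int v - \<theta> * of_int u * cnj \<pi>)" by simp
  moreover have "of_int v - \<theta> * of_int u * cnj \<pi> \<in> OK"
    using assms(1) by (intro OK_diff OK_mult OK_cnj OK_int OK_theta)
  ultimately show ?thesis using that unfolding odvd_def by blast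
qed

lemma OK_cong_int:
  assumes "\<pi> \<in> OK" "prime (N \<pi>)" "z \<in> OK"
  obtains c where "odvd \<pi> (z - of_int c)"
proof -
  obtain c where c: "odvd \<pi> (\<theta> - of_int c)" using theta_cong_int assms(1,2) .
  obtain x y where z: "z = of_int x + of_int y * \<theta>" using assms(3) by (rule OK_cases)
  have "z - of_int (x + y * c) = (\<theta> - of_int c) * of_int y" by (simp add: z algebra_simps)
  then show ?thesis using that odvd_mult[OF c OK_int] by metis
qed

lemma prime_norm_odvd_mult:
  assumes \<pi>: "\<pi> \<in> OK" "prime (N \<pi>)" and "z \<in> OK" "w \<in> OK" "odvd \<pi> (z * w)"
  shows "odvd \<pi> z \<or> odvd \<pi> w"
proof -
  obtain c where c: "odvd \<pi> (z - of_int c)" using OK_cong_int \<pi> \<open>z \<in> OK\<close> .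
  obtain e where e: "odvd \<pi> (w - of_int e)" using OK_cong_int \<pi> \<open>w \<in> OK\<close> .
  have "z * w - of_int (c * e) = (z - of_int c) * w + (w - of_int e) * of_int c"
    by (simp add: algebra_simps)
  then have "odvd \<pi> (z * w - of_int (c * e))"
    using c e \<open>w \<in> OK\<close> by (metis odvd_add odvd_mult OK_int)
  then have "odvd \<pi> (of_int (c * e))"
    using odvd_diff[OF \<open>odvd \<pi> (z * w)\<close>] by fastforce
  then have "N \<pi> dvd N (of_int (c * e))" using odvd_imp_N_dvd \<pi>(1) by blast
  then have "N \<pi> dvd (c * e)^2" by (simp only: N_of_int)
  then have "N \<pi> dvd c \<or> N \<pi> dvd e"
    using \<pi>(2) by (simp add: prime_dvd_power_iff prime_dvd_mult_iff)
  then have "odvd \<pi> (of_int c) \<or> odvd \<pi> (of_int e)"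
    using odvd_of_int_dvd[OF odvd_N[OF \<pi>(1)]] by blast
  then show ?thesis using odvd_add c e by fastforce
qed

lemma prime_norm_odvd_power:
  assumes "\<pi> \<in> OK" "prime (N \<pi>)" "w \<in> OK" "odvd \<pi> (w ^ j)"
  shows "odvd \<pi> w"
  using assms(4)
proof (induction j)
  case 0
  then have "N \<pi> dvd N 1" using odvd_imp_N_dvd[OF _ assms(1)] by simp
  then have "is_unit (N \<pi>)" using N_of_int[of 1] by simp
  then show ?case using assms(2) not_prime_unit by blast
next
  case (Suc j)
  then show ?case using prime_norm_odvd_mult[OF assms(1-3)] assms(3) by auto
qed

lemma prime_norm_odvd_N:
  assumes "\<pi> \<in> OK" "prime (N \<pi>)" "w \<in> OK" "N \<pi> dvd N w"
  shows "odvd \<pi> w \<or> odvd (cnj \<pi>) w"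
proof -
  have "odvd \<pi> (w * cnj w)"
    using odvd_of_int_dvd[OF odvd_N] assms by (simp add: mult_cnj_eq_N)
  then have "odvd \<pi> w \<or> odvd \<pi> (cnj w)" using prime_norm_odvd_mult assms by blast
  then show ?thesis using odvd_cnj by fastforce
qed

lemma non_inert_dvd_nform:
  assumes "prime p" "\<not> inert p"
  obtains x where "p dvd nform x 1"
proof -
  obtain z where z: "z \<in> OK" "p dvd N z" "\<not> odvd (of_int p) z"
    using assms(2) unfolding inert_def by blast
  obtain x y where xy: "z = of_int x + of_int y * \<theta>" using z(1) by (rule OK_cases)
  have dvd_xy: "p dvd nform x y" using z(2) by (simp add: xy N_OK_coords)
  have "\<not> p dvd y"
  proof
    assume "p dvd y"
    then have "p dvd x" using prime_dvd_nform_imp_dvd_fst assms(1) dvd_xy by blast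
    then show False using z(3) \<open>p dvd y\<close> by (simp add: xy odvd_of_int_iff)
  qed
  then have "coprime y p" using assms(1) by (metis prime_imp_coprime coprime_commute)
  then obtain v where "[y * v = 1] (mod p)" using cong_solve_coprime_int by blast
  then have "[nform (x * v) (y * v) = nform (x * v) 1] (mod p)"
    by (intro nform_cong cong_refl)
  moreover have "p dvd nform (x * v) (y * v)"
    using nform_mult[of v x y] dvd_xy by (simp add: mult.commute)
  ultimately show ?thesis using that cong_dvd_iff by blast
qed

lemma odvd_prime_factor:
  assumes "prime q" "w \<in> OK" "q dvd N w" "inert q \<or> (\<exists>r\<in>OK. N r = q)"
  obtains s w' where "s \<in> OK" "w' \<in> OK" "w = s * w'" "N s = q \<or> N s = q^2"
proof -
  have "\<exists>s\<in>OK. odvd s w \<and> (N s = q \<or> N s = q^2)"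
    using assms(4)
  proof
    assume "inert q"
    then have "odvd (of_int q) w" using assms(2,3) unfolding inert_def by blast
    then show ?thesis by (intro bexI[of _ "of_int q"]) auto
  next
    assume "\<exists>r\<in>OK. N r = q"
    then obtain r where r: "r \<in> OK" "N r = q" by blast
    then have "odvd r w \<or> odvd (cnj r) w" using prime_norm_odvd_N assms by simp
    then show ?thesis using r by (metis OK_cnj N_cnj)
  qed
  then show ?thesis using that unfolding odvd_def by blast
qed

lemma nform_eq_1_iff: "nform a b = 1 \<longleftrightarrow> b = 0 \<and> (a = 1 \<or> a = -1)"
proof
  assume "nform a b = 1"
  then have sum4: "(2*a + t*b)^2 + (4*n - t^2) * b^2 = 4" using four_nform[of a b] by simp
  have "b = 0"
  proof (rule ccontr)
    assume "b \<noteq> 0"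
    then have "b^2 \<ge> 1" by (simp add: int_one_le_iff_zero_less)
    then have "4*n - t^2 \<le> (4*n - t^2) * b^2"
      using disc_gt_4 mult_left_mono[of 1 "b^2" "4*n - t^2"] by simp
    then show False using sum4 disc_gt_4 zero_le_power2[of "2*a + t*b"] by linarith
  qed
  then show "b = 0 \<and> (a = 1 \<or> a = -1)"
    using \<open>nform a b = 1\<close> by (simp add: nform_def power2_eq_1_iff)
qed (auto simp: nform_def)

lemma norm_shell_1: "norm_shell 1 = {1, -1}"
proof -
  have "z \<in> norm_shell 1 \<longleftrightarrow> z = 1 \<or> z = -1" for z
  proof
    assume "z \<in> norm_shell 1"
    then obtain a b where "z = of_int a + of_int b * \<theta>" "nform a b = 1"
      unfolding norm_shell_def by (auto elim: OK_cases simp: N_OK_coords)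
    then show "z = 1 \<or> z = -1" by (auto simp: nform_eq_1_iff)
  next
    assume "z = 1 \<or> z = -1"
    then show "z \<in> norm_shell 1"
      unfolding norm_shell_def using N_of_int[of 1] N_of_int[of "-1"] by auto
  qed
  then show ?thesis by blast
qed

lemma shell_sq_sum_1: "shell_sq_sum 1 = 2"
  unfolding shell_sq_sum_def norm_shell_1 by simp

lemma finite_norm_shell: "finite (norm_shell k)"
proof -
  define B where "B = 2 * \<bar>k\<bar> + 1"
  have "norm_shell k \<subseteq> (\<lambda>(a, b). of_int a + of_int b * \<theta>) ` ({-B..B} \<times> {-B..B})"
  proof
    fix z assume "z \<in> norm_shell k"
    then obtain a b where z: "z = of_int a + of_int b * \<theta>" and "nform a b = k"
      unfolding norm_shell_def by (auto elim: OK_cases simp: N_OK_coords)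
    then have sum4: "(2*a + t*b)^2 + (4*n - t^2) * b^2 = 4 * k" using four_nform[of a b] by simp
    have "B^2 = 4 * \<bar>k\<bar>^2 + 4 * \<bar>k\<bar> + 1" unfolding B_def by (simp add: power2_eq_square algebra_simps)
    then have "4 * k \<le> B^2" using zero_le_power2[of "\<bar>k\<bar>"] abs_ge_self[of k] by linarith
    moreover have "b^2 \<le> (4*n - t^2) * b^2" using disc_gt_4 by (simp add: mult_le_cancel_right1)
    ultimately have "b^2 \<le> B^2" "(2*a + t*b)^2 \<le> B^2"
      using sum4 zero_le_power2[of "2*a + t*b"] zero_le_power2[of b] by linarith+
    then have "\<bar>b\<bar> \<le> \<bar>B\<bar>" "\<bar>2*a + t*b\<bar> \<le> \<bar>B\<bar>" by (simp_all only: abs_le_square_iff)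
    moreover have "\<bar>B\<bar> = B" by (simp add: B_def)
    ultimately have "\<bar>b\<bar> \<le> B" "\<bar>2*a + t*b\<bar> \<le> B" by simp_all
    moreover have "\<bar>t*b\<bar> \<le> \<bar>b\<bar>" using trace_01 by auto
    ultimately have "\<bar>a\<bar> \<le> B" by linarith
    with \<open>\<bar>b\<bar> \<le> B\<close> show "z \<in> (\<lambda>(a, b). of_int a + of_int b * \<theta>) ` ({-B..B} \<times> {-B..B})"
      unfolding z by (auto intro!: image_eqI[of _ _ "(a, b)"])
  qed
  then show ?thesis by (rule finite_subset) auto
qed

lemma norm_shell_odvd:
  assumes "r \<in> OK" "r \<noteq> 0" "N r dvd k"
  shows "{z \<in> norm_shell k. odvd r z} = (\<lambda>w. r * w) ` norm_shell (k div N r)"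
proof -
  have "N r > 0" using assms N_nonneg N_eq_0_iff by fastforce
  have "N (r * w) = k \<longleftrightarrow> N w = k div N r" if "w \<in> OK" for w
    using that assms \<open>N r > 0\<close> N_mult by auto
  then show ?thesis
    unfolding norm_shell_def odvd_def using assms(1) by auto
qed

lemma norm_shell_odvd_empty:
  assumes "r \<in> OK" "\<not> N r dvd k"
  shows "{z \<in> norm_shell k. odvd r z} = {}"
  using assms odvd_imp_N_dvd unfolding norm_shell_def by auto

lemma odvd_conj_pair_iff:
  assumes r: "r \<in> OK" "prime (N r)" "\<not> odvd r (cnj r)" and "z \<in> OK"
  shows "odvd r z \<and> odvd (cnj r) z \<longleftrightarrow> odvd (of_int (N r)) z"
proof
  assume "odvd r z \<and> odvd (cnj r) z"
  then obtain w where w: "w \<in> OK" "z = r * w" "odvd (cnj r) (r * w)"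
    unfolding odvd_def by auto
  have "\<not> odvd (cnj r) r" using r(3) odvd_cnj by fastforce
  then have "odvd (cnj r) w"
    using prime_norm_odvd_mult[of "cnj r" r w] w r by auto
  then obtain w' where "w' \<in> OK" "z = r * cnj r * w'"
    using w unfolding odvd_def by (auto simp: mult.assoc)
  then show "odvd (of_int (N r)) z" using mult_cnj_eq_N[OF r(1)] unfolding odvd_def by auto
next
  assume "odvd (of_int (N r)) z"
  then show "odvd r z \<and> odvd (cnj r) z"
    using odvd_trans odvd_N r(1) OK_cnj by (metis N_cnj)
qed

text \<open>The lattice points of norm \<open>k\<close> divisible by \<open>r\<close> and by \<open>cnj r\<close> overlap exactly in
  the multiples of \<open>p = N r\<close>; inclusion--exclusion gives a Hecke-type recursion.\<close>
lemma shell_sq_sum_split_rec: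
  assumes r: "r \<in> OK" "N r = p" "prime p" "\<not> odvd r (cnj r)" and "p dvd k"
  shows "shell_sq_sum k = (r^2 + cnj r^2) * shell_sq_sum (k div p)
    - (if p^2 dvd k then of_int p ^ 2 * shell_sq_sum (k div p^2) else 0)"
proof -
  have "r \<noteq> 0" using r N_of_int[of 0] prime_gt_1_int[of p] by auto
  have cr: "cnj r \<in> OK" "cnj r \<noteq> 0" "N (cnj r) = p" using r \<open>r \<noteq> 0\<close> by auto
  have p0: "(of_int p :: complex) \<noteq> 0" using prime_gt_1_int[OF r(3)] by simp
  define A1 where "A1 = {z \<in> norm_shell k. odvd r z}"
  define A2 where "A2 = {z \<in> norm_shell k. odvd (cnj r) z}"
  have union: "norm_shell k = A1 \<union> A2"
    using prime_norm_odvd_N[of r] r \<open>p dvd k\<close> unfolding A1_def A2_def norm_shell_def by auto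
  have A12: "A1 \<inter> A2 = {z \<in> norm_shell k. odvd (of_int p) z}"
    using odvd_conj_pair_iff[of r] r unfolding A1_def A2_def norm_shell_def by auto
  have "shell_sq_sum k + (\<Sum>z\<in>A1 \<inter> A2. z^2) = (\<Sum>z\<in>A1. z^2) + (\<Sum>z\<in>A2. z^2)"
    unfolding shell_sq_sum_def union
    by (rule sum.union_inter) (auto simp: A1_def A2_def finite_norm_shell)
  moreover have "(\<Sum>z\<in>A1. z^2) = r^2 * shell_sq_sum (k div p)"
    using norm_shell_odvd[of r k] r \<open>r \<noteq> 0\<close> \<open>p dvd k\<close>
    unfolding A1_def shell_sq_sum_def by (simp add: sum_sq_mult_image)
  moreover have "(\<Sum>z\<in>A2. z^2) = cnj r^2 * shell_sq_sum (k div p)"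
    using norm_shell_odvd[of "cnj r" k] cr \<open>p dvd k\<close>
    unfolding A2_def shell_sq_sum_def by (simp add: sum_sq_mult_image)
  moreover have "(\<Sum>z\<in>A1 \<inter> A2. z^2)
      = (if p^2 dvd k then of_int p ^ 2 * shell_sq_sum (k div p^2) else 0)"
  proof (cases "p^2 dvd k")
    case True
    then show ?thesis using norm_shell_odvd[of "of_int p" k] p0
      unfolding A12 shell_sq_sum_def by (simp add: sum_sq_mult_image)
  next
    case False
    then have "{z \<in> norm_shell k. odvd (of_int p) z} = {}"
      by (intro norm_shell_odvd_empty) simp_all
    then show ?thesis using False unfolding A12 by (simp only: sum.empty if_False)
  qed
  ultimately show ?thesis by (simp add: algebra_simps)
qed

lemma shell_sq_sum_split_power:
  assumes r: "r \<in> OK" "N r = p" "prime p" "\<not> odvd r (cnj r)" and "\<not> p dvd m"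
  shows "shell_sq_sum (p^e * m) = complete_hom (r^2) (cnj r^2) e * shell_sq_sum m"
proof (induction e rule: induct_nat_012)
  case 0
  then show ?case by simp
next
  case 1
  have "p > 1" using r(3) prime_gt_1_int by blast
  then have "\<not> p^2 dvd p * m" using \<open>\<not> p dvd m\<close> by (simp add: power2_eq_square)
  then show ?case using shell_sq_sum_split_rec[OF r, of "p * m"] \<open>p > 1\<close> by simp
next
  case (ge2 e)
  have "p > 1" using r(3) prime_gt_1_int by blast
  define k where "k = p^Suc (Suc e) * m"
  have k1: "k = p * (p^Suc e * m)" and k2: "k = p^2 * (p^e * m)"
    by (simp_all add: k_def power2_eq_square)
  have "p dvd k" "k div p = p^Suc e * m" unfolding k1 using \<open>p > 1\<close> by simp_all
  moreover have "p^2 dvd k" "k div p^2 = p^e * m" unfolding k2 using \<open>p > 1\<close> by simp_all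
  ultimately have "shell_sq_sum k
      = (r^2 + cnj r^2) * shell_sq_sum (p^Suc e * m) - of_int p ^ 2 * shell_sq_sum (p^e * m)"
    using shell_sq_sum_split_rec[OF r, of k] by simp
  moreover have "(of_int p :: complex)^2 = r^2 * cnj r^2"
    using mult_cnj_eq_N[OF r(1)] r(2) by (simp flip: power_mult_distrib)
  ultimately show ?case using ge2 unfolding k_def by (simp add: algebra_simps)
qed

lemma complete_hom_cong:
  assumes "a \<in> OK" "b \<in> OK"
  shows "\<exists>u\<in>OK. complete_hom a b e = b^e + a * u"
proof (induction e rule: induct_nat_012)
  case 0
  show ?case by (intro bexI[of _ 0]) simp_all
next
  case 1
  show ?case using assms(1) by (intro bexI[of _ 1]) simp_all
next
  case (ge2 e)
  then obtain u0 u1 where "u0 \<in> OK" "complete_hom a b e = b^e + a * u0"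
    and "u1 \<in> OK" "complete_hom a b (Suc e) = b^Suc e + a * u1" by blast
  then have "complete_hom a b (Suc (Suc e)) = b^Suc (Suc e) + a * ((a + b) * u1 - a * b * u0)"
    by (simp add: algebra_simps)
  moreover have "(a + b) * u1 - a * b * u0 \<in> OK"
    using assms \<open>u0 \<in> OK\<close> \<open>u1 \<in> OK\<close> by (intro OK_add OK_diff OK_mult OK_power)
  ultimately show ?case by blast
qed

text \<open>\<open>complete_hom (r^2) (cnj r^2) e \<equiv> cnj r^(2e)\<close> modulo \<open>r\<close>, and \<open>r\<close> does not divide \<open>cnj r\<close>.\<close>
lemma complete_hom_split_nonzero:
  assumes "r \<in> OK" "prime (N r)" "\<not> odvd r (cnj r)"
  shows "complete_hom (r^2) (cnj r^2) e \<noteq> 0"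
proof
  assume "complete_hom (r^2) (cnj r^2) e = 0"
  moreover obtain u where "u \<in> OK" "complete_hom (r^2) (cnj r^2) e = (cnj r^2)^e + r^2 * u"
    using complete_hom_cong assms(1) by (meson OK_cnj OK_power)
  ultimately have "(cnj r^2)^e = - (r^2 * u)" by (simp add: eq_neg_iff_add_eq_0)
  then have "cnj r ^ (2 * e) = r * (- r * u)" by (simp add: power_mult power2_eq_square)
  then have "odvd r (cnj r ^ (2 * e))"
    using \<open>u \<in> OK\<close> assms(1) unfolding odvd_def by blast
  then show False
    using prime_norm_odvd_power assms by blast
qed

lemma norm_shell_nonempty_prime_div:
  assumes "r \<in> OK" "prime (N r)" "norm_shell (N r * k) \<noteq> {}"
  shows "norm_shell k \<noteq> {}"
proof -
  obtain z where z: "z \<in> OK" "N z = N r * k" using assms(3) unfolding norm_shell_def by blast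
  then have "odvd r z \<or> odvd (cnj r) z" using prime_norm_odvd_N assms(1,2) by simp
  then obtain s w where "s \<in> OK" "N s = N r" "w \<in> OK" "z = s * w"
    using assms(1) unfolding odvd_def by (metis OK_cnj N_cnj)
  moreover have "N r \<noteq> 0" using assms(2) by auto
  ultimately have "N w = k" using z N_mult by auto
  then show ?thesis using \<open>w \<in> OK\<close> unfolding norm_shell_def by blast
qed

lemma norm_shell_nonempty_prime_power_div:
  assumes "r \<in> OK" "N r = p" "prime p" "norm_shell (p^e * k) \<noteq> {}"
  shows "norm_shell k \<noteq> {}"
  using assms(4)
proof (induction e)
  case (Suc e)
  then show ?case using norm_shell_nonempty_prime_div[of r "p^e * k"] assms(1-3)
    by (simp add: mult.assoc)
qed simp

lemma shell_sq_sum_inert: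
  assumes "inert p" "p \<noteq> 0" "p dvd k" "norm_shell k \<noteq> {}"
  obtains j where "k = p^2 * j" "norm_shell j \<noteq> {}" "shell_sq_sum k = of_int p ^ 2 * shell_sq_sum j"
proof -
  have all: "odvd (of_int p) z" if "z \<in> norm_shell k" for z
    using assms that unfolding inert_def norm_shell_def by auto
  obtain z where "z \<in> norm_shell k" using assms(4) by blast
  then have "p^2 dvd k" using all[of z] odvd_imp_N_dvd unfolding norm_shell_def by fastforce
  then obtain j where j: "k = p^2 * j" by (elim dvdE)
  then have "norm_shell k = (\<lambda>w. of_int p * w) ` norm_shell j"
    using norm_shell_odvd[of "of_int p" k] all assms(2) by auto
  then show ?thesis
    using that[OF j] assms(2,4) unfolding shell_sq_sum_def by (simp add: sum_sq_mult_image)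
qed

lemma shell_sq_sum_ramified:
  assumes "r \<in> OK" "prime (N r)" "odvd r (cnj r)" "N r dvd k" "norm_shell k \<noteq> {}"
  shows "norm_shell (k div N r) \<noteq> {}" "shell_sq_sum k = r^2 * shell_sq_sum (k div N r)"
proof -
  have "odvd r z" if "z \<in> norm_shell k" for z
    using prime_norm_odvd_N[of r z] odvd_trans[OF assms(3)] assms that
    unfolding norm_shell_def by auto
  moreover have "r \<noteq> 0" using assms(2) N_of_int[of 0] by auto
  ultimately have "norm_shell k = (\<lambda>w. r * w) ` norm_shell (k div N r)"
    using norm_shell_odvd[of r k] assms(1,4) by auto
  then show "norm_shell (k div N r) \<noteq> {}" "shell_sq_sum k = r^2 * shell_sq_sum (k div N r)"
    using assms(5) \<open>r \<noteq> 0\<close> unfolding shell_sq_sum_def by (auto simp: sum_sq_mult_image)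
qed

end

section \<open>Class number one\<close>

text \<open>The extra hypothesis says that \<open>X^2 + t X + n\<close> has no root modulo any prime
  \<open>p \<le> \<surd>(|D|/3)\<close>, \<open>D = t^2 - 4n\<close>; this is what makes \<open>OK\<close> a unique factorisation domain.\<close>
locale imag_quadratic_class_one = imag_quadratic_ring +
  assumes small_primes_inert:
    "\<And>p x y. prime p \<Longrightarrow> 3*p^2 \<le> 4*n - t^2 \<Longrightarrow> p dvd x^2 + t*x*y + n*y^2 \<Longrightarrow> p dvd y"
begin

lemma non_inert_small_norm_multiple:
  assumes "prime p" "\<not> inert p"
  obtains w k where "w \<in> OK" "N w = p * k" "0 < k" "k < p"
proof -
  obtain x where x: "p dvd nform x 1" using non_inert_dvd_nform assms .
  have p: "p > 1" using prime_gt_1_int assms(1) by blast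
  have disc: "4*n - t^2 < 3*p^2"
    using small_primes_inert[OF assms(1), of x 1] x p by (force simp: nform_def)
  obtain c where c: "[c = x] (mod p)" "\<bar>2*c + t\<bar> \<le> p"
    using exists_cong_centered[of p x t] p by auto
  have "p dvd nform c 1" using nform_cong[OF c(1) cong_refl] x cong_dvd_iff by blast
  then obtain k where k: "nform c 1 = p * k" by (elim dvdE)
  have "(2*c + t)^2 \<le> p^2" using c(2) p abs_le_square_iff[of "2*c + t" p] by simp
  moreover have "4 * (p * k) = (2*c + t)^2 + (4*n - t^2)" using four_nform[of c 1] k by simp
  ultimately have "0 < p * k" "p * k < p^2"
    using disc disc_gt_4 zero_le_power2[of "2*c + t"] by linarith+
  then have "0 < k" "k < p" using p by (simp_all add: zero_less_mult_iff power2_eq_square)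
  moreover have "N (of_int c + of_int 1 * \<theta>) = p * k" by (simp only: N_OK_coords k)
  ultimately show ?thesis using that mem_OK by blast
qed

text \<open>Fermat's descent: the prime factors of \<open>k\<close> are inert or split, so they can be divided
  out of \<open>w\<close> one at a time.\<close>
lemma norm_of_small_multiple:
  assumes "prime p"
    and smaller: "\<And>q. prime q \<Longrightarrow> q < p \<Longrightarrow> inert q \<or> (\<exists>r\<in>OK. N r = q)"
    and "w \<in> OK" "N w = p * k" "0 < k" "k < p"
  shows "\<exists>r\<in>OK. N r = p"
  using assms(3-)
proof (induction "nat k" arbitrary: k w rule: less_induct)
  case less
  show ?case
  proof (cases "k = 1")
    case True
    with less.prems show ?thesis by auto
  next
    case False
    then obtain q where q: "prime q" "q dvd k"
      using prime_divisor_exists[of k] less.prems(3) by auto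
    have "q < p" using zdvd_imp_le[OF q(2)] less.prems by linarith
    have "q dvd N w" using q(2) less.prems(2) by simp
    then obtain s w' where s: "s \<in> OK" "w' \<in> OK" "w = s * w'" "N s = q \<or> N s = q^2"
      using odvd_prime_factor[OF q(1) less.prems(1)] smaller[OF q(1) \<open>q < p\<close>] by metis
    have "coprime q p"
      using \<open>q < p\<close> q(1) \<open>prime p\<close> by (metis primes_dvd_imp_eq prime_imp_coprime less_irrefl)
    then have "coprime (N s) p" using s(4) by auto
    moreover have "N s dvd p * k"
      using s less.prems(2) N_mult by (metis dvd_triv_left)
    ultimately obtain k' where k': "k = N s * k'"
      by (metis coprime_dvd_mult_right_iff dvdE)
    have "N s > 1" using s(4) prime_gt_1_int[OF q(1)] by (auto simp: power2_eq_square less_1_mult)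
    then have "0 < k' \<and> k' < k" using pos_factor_less less.prems(3) k' by blast
    moreover have "N w' = p * k'"
      using less.prems(2) s(1-3) k' \<open>N s > 1\<close> N_mult by (simp add: algebra_simps)
    ultimately show ?thesis
      using less.hyps[of k' w'] less.prems(4) s(2) by auto
  qed
qed

lemma prime_inert_or_norm:
  assumes "prime p"
  shows "inert p \<or> (\<exists>r\<in>OK. N r = p)"
  using assms
proof (induction "nat p" arbitrary: p rule: less_induct)
  case less
  show ?case
  proof (cases "inert p")
    case False
    then obtain w k where "w \<in> OK" "N w = p * k" "0 < k" "k < p"
      using non_inert_small_norm_multiple less.prems by blast
    moreover have "inert q \<or> (\<exists>r\<in>OK. N r = q)" if "prime q" "q < p" for q
      using less.hyps[of q] that prime_gt_1_int[OF that(1)] by simp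
    ultimately show ?thesis
      using norm_of_small_multiple less.prems by blast
  qed simp
qed

lemma shell_sq_sum_reduction:
  assumes "k > 1" "norm_shell k \<noteq> {}"
  obtains c k' where "c \<noteq> 0" "0 < k'" "k' < k" "norm_shell k' \<noteq> {}"
    "shell_sq_sum k = c * shell_sq_sum k'"
proof -
  obtain p where p: "prime p" "p dvd k" using prime_divisor_exists[of k] assms(1) by auto
  have "p > 1" using prime_gt_1_int p(1) by blast
  have "0 < k" using assms(1) by simp
  consider "inert p"
    | r where "r \<in> OK" "N r = p" "odvd r (cnj r)"
    | r where "r \<in> OK" "N r = p" "\<not> odvd r (cnj r)"
    using prime_inert_or_norm[OF p(1)] by blast
  then show ?thesis
  proof cases
    case 1
    have "p \<noteq> 0" using \<open>p > 1\<close> by simp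
    obtain j where j: "k = p^2 * j" "norm_shell j \<noteq> {}"
      "shell_sq_sum k = of_int p ^ 2 * shell_sq_sum j"
      by (rule shell_sq_sum_inert[OF 1 \<open>p \<noteq> 0\<close> p(2) assms(2)])
    have "p^2 > 1" using \<open>p > 1\<close> by (simp add: power2_eq_square less_1_mult)
    then have "0 < j" "j < k" using pos_factor_less[OF \<open>0 < k\<close> _ j(1)] by simp_all
    show ?thesis
      by (rule that[of "of_int p ^ 2" j]) (use j \<open>p \<noteq> 0\<close> \<open>0 < j\<close> \<open>j < k\<close> in simp_all)
  next
    case (2 r)
    have "k = p * (k div p)" using p(2) by simp
    from pos_factor_less[OF \<open>0 < k\<close> \<open>p > 1\<close> this]
    have "0 < k div p" "k div p < k" by simp_all
    moreover have "r \<noteq> 0" using 2 \<open>p > 1\<close> N_of_int[of 0] by auto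
    moreover have "norm_shell (k div p) \<noteq> {}" "shell_sq_sum k = r^2 * shell_sq_sum (k div p)"
      using shell_sq_sum_ramified[of r k] 2 p assms(2) by simp_all
    ultimately show ?thesis by (intro that[of "r^2" "k div p"]) simp_all
  next
    case (3 r)
    define e where "e = multiplicity p k"
    obtain m where m: "k = p^e * m" "\<not> p dvd m"
      using multiplicity_decompose'[of k p] \<open>0 < k\<close> \<open>p > 1\<close> unfolding e_def by force
    have "e \<noteq> 0"
    proof
      assume "e = 0"
      then show False using m p(2) by simp
    qed
    have "p^e > 1" using \<open>p > 1\<close> \<open>e \<noteq> 0\<close> by simp
    show ?thesis
    proof (rule that)
      show "complete_hom (r^2) (cnj r^2) e \<noteq> 0"
        using complete_hom_split_nonzero 3 p(1) by simp
      show "norm_shell m \<noteq> {}"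
        using norm_shell_nonempty_prime_power_div[of r p e m] 3 p(1) assms(2) m(1) by simp
      show "0 < m" "m < k"
        using pos_factor_less[OF \<open>0 < k\<close> \<open>p^e > 1\<close> m(1)] by simp_all
      show "shell_sq_sum k = complete_hom (r^2) (cnj r^2) e * shell_sq_sum m"
        using shell_sq_sum_split_power[of r p m e] 3 p(1) m by simp
    qed
  qed
qed

lemma shell_sq_sum_nonzero:
  assumes "k > 0" "norm_shell k \<noteq> {}"
  shows "shell_sq_sum k \<noteq> 0"
  using assms
proof (induction "nat k" arbitrary: k rule: less_induct)
  case less
  show ?case
  proof (cases "k = 1")
    case False
    then obtain c k' where "c \<noteq> 0" "0 < k'" "k' < k" "norm_shell k' \<noteq> {}"
      "shell_sq_sum k = c * shell_sq_sum k'"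
      using shell_sq_sum_reduction[of k] less.prems by force
    then show ?thesis using less.hyps[of k'] by simp
  qed (simp add: shell_sq_sum_1)
qed

lemma shell_sum_sq_nonzero:
  assumes "\<theta> = theta d" "m > 0" "shell d m \<noteq> {}"
  shows "(\<Sum>x\<in>shell d m. x^2) \<noteq> 0"
proof -
  have shell: "shell d m = {x \<in> OK. (cmod x)^2 = m}"
    unfolding shell_def OK_lattice_def OK_def by (simp add: assms(1))
  then obtain z where z: "z \<in> OK" "(cmod z)^2 = m" using assms(3) by blast
  then have m: "m = of_int (N z)" by (simp add: cmod_sq_eq_N)
  then have "shell d m = norm_shell (N z)"
    unfolding shell norm_shell_def by (auto simp: cmod_sq_eq_N)
  moreover have "N z > 0" using assms(2) m by simp
  ultimately show ?thesis
    using shell_sq_sum_nonzero assms(3) unfolding shell_sq_sum_def by auto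
qed

end

section \<open>The fields \<open>\<rat>(\<surd>-d)\<close>, \<open>d \<in> {2, 7, 11, 19, 43, 67, 163}\<close>\<close>

lemma class_one_theta_2: "imag_quadratic_class_one 0 2 (theta 2)"
proof -
  have \<theta>: "theta 2 = \<i> * complex_of_real (sqrt 2)" unfolding theta_def by simp
  show ?thesis
  proof unfold_locales
    show "theta 2 ^ 2 = of_int 0 * theta 2 - of_int 2"
      unfolding \<theta> by (simp add: power_mult_distrib flip: of_real_power)
    show "cnj (theta 2) = of_int 0 - theta 2" unfolding \<theta> by (simp add: complex_eq_iff)
    show "Im (theta 2) \<noteq> 0" unfolding \<theta> by simp
    fix p x y :: int
    assume "prime p" "3*p^2 \<le> 4*2 - 0^2"
    then show "p dvd y" using le_of_three_sq_le[of p 8 1] prime_gt_1_int[of p] by simp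
  qed simp_all
qed

lemma class_one_theta_3_mod_4:
  fixes d :: int
  assumes "d > 4" "d mod 4 = 3"
    and small: "\<And>p. prime p \<Longrightarrow> 3*p^2 \<le> d \<Longrightarrow>
      \<forall>a\<in>{0..<p}. \<forall>b\<in>{0..<p}. p dvd a^2 + a*b + (d + 1) div 4 * b^2 \<longrightarrow> b = 0"
  shows "imag_quadratic_class_one 1 ((d + 1) div 4) (theta d)"
proof -
  define n where "n = (d + 1) div 4"
  have n: "4 * n = d + 1" using assms(2) unfolding n_def by presburger
  define s where "s = sqrt (real_of_int d)"
  have "s^2 = real_of_int d" "s > 0" using assms(1) unfolding s_def by simp_all
  have "(- d) mod 4 = 1" using assms(2) by presburger
  then have \<theta>: "theta d = (1 + \<i> * complex_of_real s) / 2" unfolding theta_def s_def by simp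
  have "imag_quadratic_class_one 1 n (theta d)"
  proof unfold_locales
    show "theta d ^ 2 = of_int 1 * theta d - of_int n"
    proof (rule complex_eqI)
      have "4 * real_of_int n = real_of_int d + 1" using arg_cong[OF n, of real_of_int] by simp
      then have "real_of_int n = (s^2 + 1) / 4" using \<open>s^2 = real_of_int d\<close> by (simp add: field_simps)
      then show "Re (theta d ^ 2) = Re (of_int 1 * theta d - of_int n)"
        unfolding \<theta> by (simp add: Re_power2 power_divide)
    qed (simp add: \<theta> Im_power2)
    show "cnj (theta d) = of_int 1 - theta d" unfolding \<theta> by (simp add: complex_eq_iff)
    show "Im (theta d) \<noteq> 0" unfolding \<theta> using \<open>s > 0\<close> by simp
    show "4 * n - 1^2 > 4" using n assms(1) by simp
    fix p x y :: int
    assume "prime p" "3*p^2 \<le> 4*n - 1^2" "p dvd x^2 + 1*x*y + n*y^2"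
    then show "p dvd y"
      using dvd_binary_form_by_residues[of p x 1 y n] small[of p] prime_gt_1_int[of p] n
      by (simp add: n_def)
  qed simp_all
  then show ?thesis unfolding n_def .
qed

lemma class_one_theta_3_mod_4_instances:
  assumes "d \<in> {7, 11, 19, 43, 67, 163}"
  shows "imag_quadratic_class_one 1 ((d + 1) div 4) (theta d)"
proof (rule class_one_theta_3_mod_4)
  show "d > 4" "d mod 4 = 3" using assms by auto
  fix p :: int
  assume p: "prime p" "3*p^2 \<le> d"
  then have "p \<le> 7" using le_of_three_sq_le[of p d 7] assms by auto
  then have "p = 2 \<or> p = 3 \<or> p = 5 \<or> p = 7" using prime_le_7_cases p(1) by blast
  moreover have "{0..<2::int} = {0, 1}" "{0..<3::int} = {0, 1, 2}" "{0..<5::int} = {0..4}"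
    "{0..<7::int} = {0..6}" by auto
  moreover have "{0..4::int} = {0, 1, 2, 3, 4}" "{0..6::int} = {0, 1, 2, 3, 4, 5, 6}" by auto
  ultimately show "\<forall>a\<in>{0..<p}. \<forall>b\<in>{0..<p}. p dvd a^2 + a*b + (d + 1) div 4 * b^2 \<longrightarrow> b = 0"
    using assms p(2) by auto
qed

lemma class_one_theta:
  assumes "d \<in> {2, 7, 11, 19, 43, 67, 163}"
  shows "\<exists>t n. imag_quadratic_class_one t n (theta d)"
  using assms class_one_theta_2 class_one_theta_3_mod_4_instances[of d] by (cases "d = 2") auto

theorem theorem1p3:
  fixes d :: int and m :: real
  assumes "d \<in> {2, 7, 11, 19, 43, 67, 163}"
    and "m > 0"
    and "shell d m \<noteq> {}"
  shows "\<not> spherical_design_radius 2 (sqrt m) (shell d m)"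
proof
  obtain t n where class_one: "imag_quadratic_class_one t n (theta d)"
    using class_one_theta assms(1) by blast
  assume "spherical_design_radius 2 (sqrt m) (shell d m)"
  then have "(\<Sum>x\<in>shell d m. x^2) = 0" by (rule spherical_design_radius_2_sum_sq)
  moreover have "(\<Sum>x\<in>shell d m. x^2) \<noteq> 0"
    using imag_quadratic_class_one.shell_sum_sq_nonzero[OF class_one refl assms(2,3)] .
  ultimately show False by simp
qed

end
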